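(* Let $Q=\sum_{i\in I} E_{i,\sigma(i)}\in M_n$ be a subpermutation. Then a matrix $A=[a_{ij}]\in M_n$ lies in the coset $QU_n=\{QU: U\in U_n\}$ if and only if $A$ meets the following conditions: (1) $A$ and $Q$ have the same places of nonzero rows, namely the nonzero rows of $A$ are exactly those indexed by $I$; (2) $A$ and $Q$ have the same places and values of the first nonzero entry in each nonzero row; precisely, for each $i\in I$, $a_{i,\sigma(i)}=1$ is the first nonzero entry of the $i$th row of $A$.
   Context: Let $\mathbb{F}$ be a fixed field and $M_n$ the set of $n\times n$ matrices over $\mathbb{F}$. Let $U_n$ be the group of $n\times n$ unit upper triangular matrices (upper triangular with all diagonal entries equal to $1$) over $\mathbb{F}$. For $i,j\in[n]=\{1,\ldots,n\}$, $E_{i,j}$ denotes the $n\times n$ matrix with $1$ in the $(i,j)$ entry and $0$ elsewhere. A matrix $Q\in M_n$ is a subpermutation if each of its rows and columns has at most one nonzero entry, which equals $1$. Every subpermutation $Q\in M_n$ can be written as $Q=\sum_{i\in I} E_{i,\sigma(i)}$, where $I\subseteq[n]$ and $\sigma: I\to\sigma(I)\subseteq[n]$ is a bijection (with $Q=0$ if $I=\emptyset$). *)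

theory Defs
  imports "HOL-Analysis.Analysis"
begin

text \<open>n x n matrices over a field are represented as 'a ^ 'n ^ 'n, where the index
type 'n is finite and well-ordered (hence linearly ordered), playing the role of [n].\<close>

definition unit_upper :: "(('a::field, 'n::{finite,wellorder}) vec, 'n) vec \<Rightarrow> bool" where
  "unit_upper U \<longleftrightarrow> (\<forall>i j. j < i \<longrightarrow> U $ i $ j = 0) \<and> (\<forall>i. U $ i $ i = 1)"

definition subperm :: "'n::{finite,wellorder} set \<Rightarrow> ('n \<Rightarrow> 'n) \<Rightarrow> (('a::field, 'n) vec, 'n) vec" where
  "subperm I \<sigma> = (\<chi> i j. if i \<in> I \<and> j = \<sigma> i then 1 else 0)"

definition coset_QU :: "(('a::field, 'n::{finite,wellorder}) vec, 'n) vec \<Rightarrow> (('a, 'n) vec, 'n) vec set" where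
  "coset_QU Q = {Q ** U | U. unit_upper U}"

end

theory Submission
  imports Defs
begin

text \<open>Left multiplication by the subpermutation moves row \<open>\<sigma> i\<close> of \<open>U\<close> to row \<open>i\<close> and kills
  the rows outside \<open>I\<close>. Since \<open>U\<close> is unit upper triangular, row \<open>\<sigma> i\<close> of \<open>U\<close> is exactly a row
  with leading entry \<open>1\<close> in column \<open>\<sigma> i\<close>; conversely, given such rows, the matrix \<open>U\<close> is
  recovered by putting row \<open>i\<close> of \<open>A\<close> at position \<open>\<sigma> i\<close> (injectivity of \<open>\<sigma>\<close> makes this
  well defined) and filling the remaining rows with those of the identity.\<close>

lemma subperm_matrix_mult_nth:
  fixes U :: "(('a::field, 'n::{finite,wellorder}) vec, 'n) vec"
  shows "(subperm I \<sigma> ** U) $ i $ j = (if i \<in> I then U $ \<sigma> i $ j else 0)"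
  by (simp add: matrix_matrix_mult_def subperm_def if_distrib[of "\<lambda>x. x * _"] cong: if_cong)

lemma coset_QU_subperm_rows:
  assumes "A \<in> coset_QU (subperm I \<sigma>)"
  shows "(\<forall>i. (\<exists>j. A $ i $ j \<noteq> 0) \<longleftrightarrow> i \<in> I) \<and>
    (\<forall>i\<in>I. A $ i $ \<sigma> i = 1 \<and> (\<forall>j. j < \<sigma> i \<longrightarrow> A $ i $ j = 0))"
proof -
  obtain U where U: "unit_upper U" and A: "A = subperm I \<sigma> ** U"
    using assms unfolding coset_QU_def by blast
  have row: "A $ i = U $ \<sigma> i" if "i \<in> I" for i
    using that by (simp add: A vec_eq_iff subperm_matrix_mult_nth)
  have zero_row: "A $ i $ j = 0" if "i \<notin> I" for i j
    using that by (simp add: A subperm_matrix_mult_nth)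
  have leading: "A $ i $ \<sigma> i = 1 \<and> (\<forall>j. j < \<sigma> i \<longrightarrow> A $ i $ j = 0)" if "i \<in> I" for i
    using U unfolding row[OF that] unit_upper_def by blast
  have "(\<exists>j. A $ i $ j \<noteq> 0) \<longleftrightarrow> i \<in> I" for i
    using leading[of i] zero_row[of i] by (cases "i \<in> I") (auto intro!: exI[of _ "\<sigma> i"])
  with leading show ?thesis
    by blast
qed

definition unit_upper_completion ::
    "'n::{finite,wellorder} set \<Rightarrow> ('n \<Rightarrow> 'n) \<Rightarrow> (('a::field, 'n) vec, 'n) vec \<Rightarrow> (('a, 'n) vec, 'n) vec"
  where "unit_upper_completion I \<sigma> A =
    (\<chi> k. if k \<in> \<sigma> ` I then A $ inv_into I \<sigma> k else mat 1 $ k)"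

lemma unit_upper_completion_row:
  assumes "inj_on \<sigma> I" and "i \<in> I"
  shows "unit_upper_completion I \<sigma> A $ \<sigma> i = A $ i"
  using assms by (simp add: unit_upper_completion_def)

lemma unit_upper_completion_not_image:
  assumes "k \<notin> \<sigma> ` I"
  shows "unit_upper_completion I \<sigma> A $ k $ j = (if k = j then 1 else 0)"
  using assms by (simp add: unit_upper_completion_def mat_def)

lemma unit_upper_unit_upper_completion:
  assumes "inj_on \<sigma> I"
    and leading: "\<forall>i\<in>I. A $ i $ \<sigma> i = 1 \<and> (\<forall>j. j < \<sigma> i \<longrightarrow> A $ i $ j = 0)"
  shows "unit_upper (unit_upper_completion I \<sigma> A)"
proof -
  have "unit_upper_completion I \<sigma> A $ k $ k = 1 \<and>
      (\<forall>j. j < k \<longrightarrow> unit_upper_completion I \<sigma> A $ k $ j = 0)" for k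
  proof (cases "k \<in> \<sigma> ` I")
    case True
    then obtain i where "i \<in> I" and "k = \<sigma> i"
      by blast
    then show ?thesis
      unfolding \<open>k = \<sigma> i\<close> unit_upper_completion_row[OF assms(1) \<open>i \<in> I\<close>]
      using leading by simp
  next
    case False
    then show ?thesis
      by (simp add: unit_upper_completion_not_image)
  qed
  then show ?thesis
    unfolding unit_upper_def by blast
qed

lemma subperm_mult_unit_upper_completion:
  assumes "inj_on \<sigma> I" and zero_rows: "\<forall>i. (\<exists>j. A $ i $ j \<noteq> 0) \<longrightarrow> i \<in> I"
  shows "subperm I \<sigma> ** unit_upper_completion I \<sigma> A = A"
proof -
  have "(subperm I \<sigma> ** unit_upper_completion I \<sigma> A) $ i $ j = A $ i $ j" for i j
  proof (cases "i \<in> I")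
    case True
    then show ?thesis
      unfolding subperm_matrix_mult_nth unit_upper_completion_row[OF assms(1) True] by simp
  next
    case False
    then show ?thesis
      using zero_rows by (auto simp: subperm_matrix_mult_nth)
  qed
  then show ?thesis
    by (simp add: vec_eq_iff)
qed

theorem lemma2p4:
  fixes I :: "'n::{finite,wellorder} set" and \<sigma> :: "'n \<Rightarrow> 'n"
    and A :: "(('a::field, 'n) vec, 'n) vec"
  assumes "inj_on \<sigma> I"
  shows "A \<in> coset_QU (subperm I \<sigma>) \<longleftrightarrow>
    ((\<forall>i. (\<exists>j. A $ i $ j \<noteq> 0) \<longleftrightarrow> i \<in> I) \<and>
     (\<forall>i\<in>I. A $ i $ (\<sigma> i) = 1 \<and> (\<forall>j. j < \<sigma> i \<longrightarrow> A $ i $ j = 0)))"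
proof
  assume "A \<in> coset_QU (subperm I \<sigma>)"
  then show "(\<forall>i. (\<exists>j. A $ i $ j \<noteq> 0) \<longleftrightarrow> i \<in> I) \<and>
     (\<forall>i\<in>I. A $ i $ (\<sigma> i) = 1 \<and> (\<forall>j. j < \<sigma> i \<longrightarrow> A $ i $ j = 0))"
    by (rule coset_QU_subperm_rows)
next
  assume rows: "(\<forall>i. (\<exists>j. A $ i $ j \<noteq> 0) \<longleftrightarrow> i \<in> I) \<and>
     (\<forall>i\<in>I. A $ i $ (\<sigma> i) = 1 \<and> (\<forall>j. j < \<sigma> i \<longrightarrow> A $ i $ j = 0))"
  have "unit_upper (unit_upper_completion I \<sigma> A)"
    using unit_upper_unit_upper_completion[OF assms] rows by blast
  moreover have "subperm I \<sigma> ** unit_upper_completion I \<sigma> A = A"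
    using subperm_mult_unit_upper_completion[OF assms] rows by blast
  ultimately show "A \<in> coset_QU (subperm I \<sigma>)"
    unfolding coset_QU_def by (metis (mono_tags, lifting) mem_Collect_eq)
qed

end
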